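(* Let $\Sigma$ be a linear subspace of $\mathbb{R}^d$ and $\zeta_n\in\Sigma\cap S^{d-1}$. Then, after passing to a subsequence, there exist orthonormal vectors $\zeta^1,\dots,\zeta^k\in\Sigma$, with $1\le k\le\dim\Sigma$, such that $E(\zeta_n)\to E(\zeta^1,\dots,\zeta^k)$ as $n\to\infty$, in the sense that for every $z\in\mathbb{Z}^d$, $\mathbf 1_{E(\zeta_n)}(z)\to\mathbf 1_{E(\zeta^1,\dots,\zeta^k)}(z)$.
   Context: For an orthogonal collection of nonzero vectors $\zeta^1,\dots,\zeta^k\in\mathbb{R}^d$, $E(\zeta^1,\dots,\zeta^k)=\bigcup_{j=1}^k\{z\in\mathbb{Z}^d: z\cdot\zeta^i=0\text{ for all }1\le i\le j-1,\ \text{and } z\cdot\zeta^j>0\}$ (for $j=1$ the first condition is vacuous). In particular $E(\zeta)=\{z\in\mathbb{Z}^d:z\cdot\zeta>0\}$. *)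

theory Defs
  imports "HOL-Analysis.Analysis"
begin

definition lattice :: "(real^'n) set" where
  "lattice = {z. \<forall>i. z $ i \<in> \<int>}"

definition Eset :: "(real^'n) list \<Rightarrow> (real^'n) set" where
  "Eset zs = {z \<in> lattice. \<exists>j < length zs.
      (\<forall>i < j. z \<bullet> (zs ! i) = 0) \<and> z \<bullet> (zs ! j) > 0}"

end

theory Submission
  imports Defs
begin

text \<open>Induction on the dimension of the subspace. Normalise the sequence (after discarding
  zero terms, or keeping only them) and use compactness of the unit sphere to make it converge
  to a unit vector \<open>a\<close>. If \<open>z \<bullet> a \<noteq> 0\<close>, the sign of \<open>z \<bullet> u n\<close> is eventually that of
  \<open>z \<bullet> a\<close>. If \<open>z \<bullet> a = 0\<close>, the sign of \<open>z \<bullet> u n\<close> equals that of \<open>z\<close> against the component of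
  \<open>u n\<close> orthogonal to \<open>a\<close>, a sequence in the smaller subspace \<open>a\<^sup>\<bottom>\<close>, to which the induction
  hypothesis applies. The vectors \<open>a\<close> so produced form the orthonormal list.\<close>

definition lex_positive :: "'a::real_inner list \<Rightarrow> 'a \<Rightarrow> bool" where
  "lex_positive zs z \<longleftrightarrow> (\<exists>j<length zs. (\<forall>i<j. z \<bullet> zs!i = 0) \<and> z \<bullet> zs!j > 0)"

definition orthonormal_list :: "'a::real_inner list \<Rightarrow> bool" where
  "orthonormal_list zs \<longleftrightarrow> (\<forall>i<length zs. norm (zs!i) = 1) \<and>
     (\<forall>i<length zs. \<forall>j<length zs. i \<noteq> j \<longrightarrow> zs!i \<bullet> zs!j = 0)"

definition halfspaces_tendsto :: "(nat \<Rightarrow> 'a::real_inner) \<Rightarrow> 'a list \<Rightarrow> bool" where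
  "halfspaces_tendsto u zs \<longleftrightarrow>
     (\<forall>z. (\<lambda>n. of_bool (0 < z \<bullet> u n) :: real) \<longlonglongrightarrow> of_bool (lex_positive zs z))"

lemma lex_positive_Nil [simp]: "\<not> lex_positive [] z"
  by (simp add: lex_positive_def)

lemma lex_positive_Cons:
  "lex_positive (a # zs) z \<longleftrightarrow> 0 < z \<bullet> a \<or> (z \<bullet> a = 0 \<and> lex_positive zs z)"
proof
  assume "lex_positive (a # zs) z"
  then obtain j where j: "j < Suc (length zs)" "\<forall>i<j. z \<bullet> (a # zs)!i = 0" "0 < z \<bullet> (a # zs)!j"
    by (auto simp: lex_positive_def)
  show "0 < z \<bullet> a \<or> (z \<bullet> a = 0 \<and> lex_positive zs z)"
  proof (cases j)
    case 0
    then show ?thesis using j by simp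
  next
    case (Suc j')
    then have "z \<bullet> a = 0" "\<forall>i<j'. z \<bullet> zs!i = 0"
      using j(2) by (metis nth_Cons_0 zero_less_Suc, auto)
    then show ?thesis using j Suc by (auto simp: lex_positive_def)
  qed
next
  assume "0 < z \<bullet> a \<or> (z \<bullet> a = 0 \<and> lex_positive zs z)"
  then show "lex_positive (a # zs) z"
  proof
    assume "0 < z \<bullet> a"
    then show ?thesis unfolding lex_positive_def by (intro exI[of _ 0]) auto
  next
    assume za: "z \<bullet> a = 0 \<and> lex_positive zs z"
    then obtain j where j: "j < length zs" "\<forall>i<j. z \<bullet> zs!i = 0" "0 < z \<bullet> zs!j"
      by (auto simp: lex_positive_def)
    then have "\<forall>i<Suc j. z \<bullet> (a # zs)!i = 0"
      using za by (auto simp: less_Suc_eq_0_disj)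
    then show ?thesis unfolding lex_positive_def using j by (intro exI[of _ "Suc j"]) auto
  qed
qed

lemma orthonormal_list_Cons:
  "orthonormal_list (a # zs) \<longleftrightarrow>
     norm a = 1 \<and> (\<forall>b\<in>set zs. a \<bullet> b = 0) \<and> orthonormal_list zs"
  unfolding orthonormal_list_def
  by (simp add: All_less_Suc2 all_set_conv_all_nth inner_commute) blast

lemma halfspaces_tendsto_Nil:
  assumes "\<And>n. u n = 0"
  shows "halfspaces_tendsto u []"
  by (simp add: halfspaces_tendsto_def assms)

lemma halfspaces_tendsto_scaleR_pos:
  assumes "\<And>n. 0 < c n"
  shows "halfspaces_tendsto (\<lambda>n. c n *\<^sub>R u n) zs \<longleftrightarrow> halfspaces_tendsto u zs"
proof -
  have "0 < z \<bullet> (c n *\<^sub>R u n) \<longleftrightarrow> 0 < z \<bullet> u n" for z n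
    using assms[of n] by (simp add: zero_less_mult_iff)
  then show ?thesis
    unfolding halfspaces_tendsto_def by presburger
qed

lemma halfspaces_tendsto_Cons:
  assumes lim: "y \<longlonglongrightarrow> a"
    and orth: "halfspaces_tendsto (\<lambda>n. y n - (y n \<bullet> a) *\<^sub>R a) zs"
  shows "halfspaces_tendsto y (a # zs)"
  unfolding halfspaces_tendsto_def
proof
  fix z
  have zlim: "(\<lambda>n. z \<bullet> y n) \<longlonglongrightarrow> z \<bullet> a"
    using lim by (intro tendsto_intros)
  consider "0 < z \<bullet> a" | "z \<bullet> a < 0" | "z \<bullet> a = 0" by linarith
  then show "(\<lambda>n. of_bool (0 < z \<bullet> y n) :: real) \<longlonglongrightarrow> of_bool (lex_positive (a # zs) z)"
  proof cases
    case 1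
    then have "eventually (\<lambda>n. of_bool (0 < z \<bullet> y n) = (1::real)) sequentially"
      using order_tendstoD(1)[OF zlim 1] by (auto elim: eventually_mono)
    then show ?thesis using 1 by (simp add: lex_positive_Cons tendsto_eventually)
  next
    case 2
    then have "eventually (\<lambda>n. of_bool (0 < z \<bullet> y n) = (0::real)) sequentially"
      using order_tendstoD(2)[OF zlim 2] by (auto elim: eventually_mono)
    then show ?thesis using 2 by (simp add: lex_positive_Cons tendsto_eventually)
  next
    case 3
    have "(\<lambda>n. of_bool (0 < z \<bullet> (y n - (y n \<bullet> a) *\<^sub>R a)) :: real) \<longlonglongrightarrow> of_bool (lex_positive zs z)"
      using orth unfolding halfspaces_tendsto_def by blast
    then show ?thesis
      using 3 by (simp add: inner_diff_right lex_positive_Cons)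
  qed
qed

lemma strict_mono_all_or_none:
  fixes P :: "nat \<Rightarrow> bool"
  obtains r :: "nat \<Rightarrow> nat" where "strict_mono r" "(\<forall>n. P (r n)) \<or> (\<forall>n. \<not> P (r n))"
proof (cases "infinite {n. P n}")
  case True
  then show ?thesis
    using that strict_mono_enumerate enumerate_in_set by blast
next
  case False
  then have "infinite {n. \<not> P n}"
    using infinite_UNIV_nat by (metis Collect_neg_eq finite_compl)
  then show ?thesis
    using that strict_mono_enumerate enumerate_in_set by (metis mem_Collect_eq)
qed

lemma subspace_normalized_convergent_subseq:
  fixes T :: "'a::euclidean_space set"
  assumes "subspace T" "\<And>n. u n \<in> T" "\<And>n. u n \<noteq> 0"
  obtains r :: "nat \<Rightarrow> nat" and a where "strict_mono r" "a \<in> T" "norm a = 1"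
    "(\<lambda>n. inverse (norm (u (r n))) *\<^sub>R u (r n)) \<longlonglongrightarrow> a"
proof -
  define v where "v n = inverse (norm (u n)) *\<^sub>R u n" for n
  have "compact (sphere 0 1 \<inter> T)"
    using assms(1) by (simp add: closed_subspace compact_Int_closed)
  moreover have "v n \<in> sphere 0 1 \<inter> T" for n
    using assms by (simp add: v_def subspace_scale)
  ultimately obtain a r where "a \<in> sphere 0 1 \<inter> T" "strict_mono r" "(v \<circ> r) \<longlonglongrightarrow> a"
    using seq_compactE[OF compact_imp_seq_compact, of _ v] by blast
  then show ?thesis
    using that[of r a] by (simp add: v_def o_def)
qed

lemma dim_inter_hyperplane_less:
  fixes T :: "'a::euclidean_space set"
  assumes "subspace T" "a \<in> T" "a \<noteq> 0"
  shows "dim (T \<inter> {x. a \<bullet> x = 0}) < dim T"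
proof -
  let ?T' = "T \<inter> {x. a \<bullet> x = 0}"
  have "subspace ?T'"
    using assms(1) by (rule subspace_inter[OF _ subspace_hyperplane])
  moreover have "a \<notin> ?T'"
    using assms(3) by simp
  then have "?T' \<subset> T"
    using assms(2) by blast
  ultimately have "span ?T' \<subset> span T"
    using assms(1) by (metis span_eq_iff)
  then show ?thesis by (rule dim_psubset)
qed

lemma halfspaces_tendsto_subseq:
  fixes T :: "'a::euclidean_space set" and u :: "nat \<Rightarrow> 'a"
  shows "subspace T \<Longrightarrow> (\<And>n. u n \<in> T) \<Longrightarrow>
    \<exists>r zs. strict_mono r \<and> length zs \<le> dim T \<and> set zs \<subseteq> T \<and> orthonormal_list zs \<and>
      (zs = [] \<longrightarrow> (\<forall>n. u (r n) = 0)) \<and> halfspaces_tendsto (u \<circ> r) zs"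
proof (induction "dim T" arbitrary: T u rule: less_induct)
  case less
  obtain r0 :: "nat \<Rightarrow> nat"
    where r0: "strict_mono r0" "(\<forall>n. u (r0 n) = 0) \<or> (\<forall>n. u (r0 n) \<noteq> 0)"
    by (rule strict_mono_all_or_none[of "\<lambda>n. u n = 0"])
  show ?case
  proof (cases "\<forall>n. u (r0 n) = 0")
    case True
    then show ?thesis
      using r0(1) by (intro exI[of _ r0] exI[of _ "[]"])
        (simp add: halfspaces_tendsto_Nil orthonormal_list_def)
  next
    case False
    then have nz: "u (r0 n) \<noteq> 0" for n using r0(2) by blast
    obtain r1 a where r1: "strict_mono r1" and a: "a \<in> T" "norm a = 1"
      and lim: "(\<lambda>n. inverse (norm (u (r0 (r1 n)))) *\<^sub>R u (r0 (r1 n))) \<longlonglongrightarrow> a"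
      using subspace_normalized_convergent_subseq[of T "u \<circ> r0"] less.prems nz by auto
    define y where "y n = inverse (norm (u (r0 (r1 n)))) *\<^sub>R u (r0 (r1 n))" for n
    define w where "w n = y n - (y n \<bullet> a) *\<^sub>R a" for n
    define T' where "T' = T \<inter> {x. a \<bullet> x = 0}"
    have "a \<bullet> a = 1" using a(2) by (simp add: dot_square_norm)
    then have w_in: "w n \<in> T'" for n
      using less.prems a(1) unfolding T'_def w_def y_def
      by (simp add: subspace_diff subspace_scale inner_diff_right inner_commute)
    have dim_less: "dim T' < dim T"
      unfolding T'_def using dim_inter_hyperplane_less[OF less.prems(1) a(1)] a(2) by force
    have "subspace T'"
      unfolding T'_def using less.prems(1) by (rule subspace_inter[OF _ subspace_hyperplane])
    obtain r2 zs where r2: "strict_mono r2" "length zs \<le> dim T'" "set zs \<subseteq> T'"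
      "orthonormal_list zs" "halfspaces_tendsto (w \<circ> r2) zs"
      using less.hyps[of T' w, OF dim_less \<open>subspace T'\<close> w_in] by blast
    have "halfspaces_tendsto (y \<circ> r2) (a # zs)"
      using halfspaces_tendsto_Cons[OF LIMSEQ_subseq_LIMSEQ[OF lim[folded y_def] r2(1)]] r2(5)
      by (simp add: o_def w_def)
    then have "halfspaces_tendsto (u \<circ> (r0 \<circ> r1 \<circ> r2)) (a # zs)"
      using halfspaces_tendsto_scaleR_pos[of "\<lambda>n. inverse (norm (u (r0 (r1 (r2 n)))))"
          "u \<circ> (r0 \<circ> r1 \<circ> r2)"] nz
      by (simp add: y_def o_def)
    moreover have "strict_mono (r0 \<circ> r1 \<circ> r2)"
      using r0(1) r1 r2(1) by (simp add: strict_mono_def)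
    moreover have "orthonormal_list (a # zs)"
      using a(2) r2(3,4) by (auto simp: orthonormal_list_Cons T'_def)
    moreover have "length (a # zs) \<le> dim T"
      using r2(2) dim_less by simp
    moreover have "set (a # zs) \<subseteq> T"
      using r2(3) a(1) unfolding T'_def by auto
    ultimately show ?thesis
      by blast
  qed
qed

lemma indicator_Eset:
  "z \<in> lattice \<Longrightarrow> indicator (Eset zs) z = (of_bool (lex_positive zs z) :: real)"
  by (simp add: indicator_def Eset_def lex_positive_def)

theorem mainTheorem19:
  fixes S :: "(real^'n) set" and \<zeta> :: "nat \<Rightarrow> real^'n"
  assumes "subspace S"
    and "\<And>n. \<zeta> n \<in> S"
    and "\<And>n. norm (\<zeta> n) = 1"
  shows "\<exists>r zs. strict_mono r \<and>
           1 \<le> length zs \<and> length zs \<le> dim S \<and>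
           set zs \<subseteq> S \<and>
           (\<forall>i < length zs. norm (zs ! i) = 1) \<and>
           (\<forall>i < length zs. \<forall>j < length zs. i \<noteq> j \<longrightarrow> zs ! i \<bullet> zs ! j = 0) \<and>
           (\<forall>z \<in> lattice.
              (\<lambda>n. indicator (Eset [\<zeta> (r n)]) z :: real)
                \<longlonglongrightarrow> indicator (Eset zs) z)"
proof -
  obtain r zs where "strict_mono r" "length zs \<le> dim S" "set zs \<subseteq> S" "orthonormal_list zs"
    and nonzero: "zs = [] \<longrightarrow> (\<forall>n. \<zeta> (r n) = 0)" and lim: "halfspaces_tendsto (\<zeta> \<circ> r) zs"
    using halfspaces_tendsto_subseq[of S \<zeta>, OF assms(1,2)] by blast
  moreover have "1 \<le> length zs"
    using nonzero assms(3)[of "r 0"] by (cases zs) auto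
  moreover have "(\<lambda>n. indicator (Eset [\<zeta> (r n)]) z :: real) \<longlonglongrightarrow> indicator (Eset zs) z"
    if "z \<in> lattice" for z
    using lim that by (simp add: halfspaces_tendsto_def indicator_Eset lex_positive_Cons)
  ultimately show ?thesis
    unfolding orthonormal_list_def by blast
qed

end
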